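(* Assume $\|\mathbf X\|_{\mathrm{TV}}<C_{\mathbf X}$ and $\|\mathbf z\|<C_{\mathbf z}$ almost surely, and let $r>0$. Then for any $p\in\mathbb N$, the stochastic process $(Z_{p,n}(\boldsymbol\theta_p))_{\boldsymbol\theta_p\in B_{p,r}}$, $Z_{p,n}(\boldsymbol\theta_p)=\widehat{\mathcal R}_{p,n}(\boldsymbol\theta_p)-\mathcal R_p(\boldsymbol\theta_p)$, is subgaussian with respect to the semimetric $$D(\boldsymbol\theta_p,\boldsymbol\eta_p)=\frac{C}{\sqrt n}\|\boldsymbol\theta_p-\boldsymbol\eta_p\|,\qquad \boldsymbol\theta_p,\boldsymbol\eta_p\in B_{p,r},$$ where $C=2(C_{\mathbf z}+e^{C_{\mathbf X}+T})$; that is, $\mathbb E[Z_{p,n}(\boldsymbol\theta_p)]=0$ and $\mathbb E[\exp(\lambda(Z_{p,n}(\boldsymbol\theta_p)-Z_{p,n}(\boldsymbol\eta_p)))]\le\exp(\lambda^2D(\boldsymbol\theta_p,\boldsymbol\eta_p)^2/2)$ for all $\lambda\in\mathbb R$ and $\boldsymbol\theta_p,\boldsymbol\eta_p\in B_{p,r}$.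
   Context: Let $T>0$, integers $d\ge2$, $q\ge1$. $(\mathbf X,\mathbf z,y)$ is a random triple with $\mathbf X:[0,T]\to\mathbb R^{d-1}$ a continuous bounded-variation path with fixed initial value, $\mathbf z\in\mathbb R^q$, $y\in\{0,1\}$; $\|\mathbf X\|_{\mathrm{TV}}=\sup\sum_i\|\mathbf X_{t_{i+1}}-\mathbf X_{t_i}\|$ over partitions of $[0,T]$. Time augmentation $\widetilde{\mathbf X}(t)=(\mathbf X(t),t)\in\mathbb R^d$; signature terms $S^I(\widetilde{\mathbf X})=\int_{0<t_1<\dots<t_k<T}d\widetilde X^{i_1}_{t_1}\cdots d\widetilde X^{i_k}_{t_k}$ ($I\in\{1,..,d\}^k$, empty $I$ gives 1); truncated signature $S_p(\widetilde{\mathbf X})=(S^I)_{|I|\le p}\in\mathbb R^{s_d(p)}$, $s_d(p)=\sum_{k=0}^pd^k$; $\widetilde{\mathbf S}_p(\widetilde{\mathbf X},\mathbf z)=(S_p(\widetilde{\mathbf X})^\top,\mathbf z^\top)^\top$. Logistic loss $\ell(y,\eta)=-y\eta+\log(1+e^\eta)$; $\mathcal R_p(\boldsymbol\theta_p)=\mathbb E[\ell(y,\widetilde{\mathbf S}_p^\top\boldsymbol\theta_p)]$; $B_{p,r}=\{\boldsymbol\theta\in\mathbb R^{s_d(p)+q}:\|\boldsymbol\theta\|_1\le r\}$. Data $(\mathbf X_i,\mathbf z_i,y_i)_{i=1}^n$ i.i.d. copies; $\widehat{\mathcal R}_{p,n}(\boldsymbol\theta_p)=\frac1n\sum_i\ell(y_i,\widetilde{\mathbf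 S}_p(\widetilde{\mathbf X}_i,\mathbf z_i)^\top\boldsymbol\theta_p)$. $\|\cdot\|$ denotes the Euclidean norm. *)

theory Defs
  imports "HOL-Probability.Probability"
begin

definition has_rs_integral :: "(real \<Rightarrow> real) \<Rightarrow> (real \<Rightarrow> real) \<Rightarrow> real \<Rightarrow> real \<Rightarrow> real \<Rightarrow> bool" where
  "has_rs_integral f g a b L \<longleftrightarrow>
     (\<forall>\<epsilon>>0. \<exists>\<delta>>0. \<forall>(n::nat) (t::nat \<Rightarrow> real) (\<xi>::nat \<Rightarrow> real).
        t 0 = a \<and> t n = b \<and>
        (\<forall>i<n. t i \<le> \<xi> i \<and> \<xi> i \<le> t (Suc i) \<and> t (Suc i) - t i < \<delta>) \<longrightarrow>
        \<bar>(\<Sum>i<n. f (\<xi> i) * (g (t (Suc i)) - g (t i))) - L\<bar> < \<epsilon>)"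

definition rs_integral :: "(real \<Rightarrow> real) \<Rightarrow> (real \<Rightarrow> real) \<Rightarrow> real \<Rightarrow> real \<Rightarrow> real" where
  "rs_integral f g a b = (THE L. has_rs_integral f g a b L)"

definition variation_sums :: "(real \<Rightarrow> 'a::real_normed_vector) \<Rightarrow> real \<Rightarrow> real \<Rightarrow> real set" where
  "variation_sums x a b =
     {(\<Sum>i<n. norm (x (t (Suc i)) - x (t i))) | n t.
        t 0 = a \<and> t n = b \<and> (\<forall>i<n. t i \<le> t (Suc i))}"

definition bounded_variation :: "(real \<Rightarrow> 'a::real_normed_vector) \<Rightarrow> real \<Rightarrow> real \<Rightarrow> bool" where
  "bounded_variation x a b \<longleftrightarrow> bdd_above (variation_sums x a b)"

definition total_variation :: "(real \<Rightarrow> 'a::real_normed_vector) \<Rightarrow> real \<Rightarrow> real \<Rightarrow> real" where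
  "total_variation x a b = Sup (variation_sums x a b)"

text \<open>Coordinates of the time-augmented path: Some i is the i-th coordinate of X
  (d-1 = CARD('m) of them), None is the time coordinate.\<close>
definition aug :: "(real \<Rightarrow> real^'m) \<Rightarrow> real \<Rightarrow> 'm option \<Rightarrow> real" where
  "aug x t j = (case j of None \<Rightarrow> t | Some i \<Rightarrow> x t $ i)"

text \<open>sig_rev x (rev I) t = S^I of the augmented path restricted to [0,t].\<close>
fun sig_rev :: "(real \<Rightarrow> real^'m) \<Rightarrow> 'm option list \<Rightarrow> real \<Rightarrow> real" where
  "sig_rev x [] t = 1"
| "sig_rev x (j # rw) t = rs_integral (sig_rev x rw) (\<lambda>s. aug x s j) 0 t"

definition signature :: "real \<Rightarrow> (real \<Rightarrow> real^'m) \<Rightarrow> 'm option list \<Rightarrow> real" where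
  "signature T x I = sig_rev x (rev I) T"

text \<open>Words of length at most p, indexing the truncated signature (s_d(p) of them).\<close>
definition words :: "nat \<Rightarrow> 'm option list set" where
  "words p = {w. length w \<le> p}"

text \<open>A parameter theta_p in R^(s_d(p)+q) is a pair (a, b): a gives the coefficients of the
  signature terms (indexed by words of length <= p, zero elsewhere), b those of z.\<close>
definition lin_pred :: "nat \<Rightarrow> real \<Rightarrow> (real \<Rightarrow> real^'m) \<Rightarrow> real^'q
    \<Rightarrow> ('m option list \<Rightarrow> real) \<times> (real^'q) \<Rightarrow> real" where
  "lin_pred p T x z \<theta> = (\<Sum>w\<in>words p. signature T x w * fst \<theta> w) + z \<bullet> snd \<theta>"

definition logistic_loss :: "bool \<Rightarrow> real \<Rightarrow> real" where
  "logistic_loss y \<eta> = - (of_bool y) * \<eta> + ln (1 + exp \<eta>)"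

definition l1_norm_par :: "nat \<Rightarrow> ('m option list \<Rightarrow> real) \<times> (real^'q) \<Rightarrow> real" where
  "l1_norm_par p \<theta> = (\<Sum>w\<in>words p. \<bar>fst \<theta> w\<bar>) + (\<Sum>j\<in>UNIV. \<bar>snd \<theta> $ j\<bar>)"

definition eucl_norm_par :: "nat \<Rightarrow> ('m option list \<Rightarrow> real) \<times> (real^'q) \<Rightarrow> real" where
  "eucl_norm_par p \<theta> = sqrt ((\<Sum>w\<in>words p. (fst \<theta> w)\<^sup>2) + (norm (snd \<theta>))\<^sup>2)"

definition ball_par :: "nat \<Rightarrow> real \<Rightarrow> (('m option list \<Rightarrow> real) \<times> (real^'q)) set" where
  "ball_par p r = {\<theta>. (\<forall>w. p < length w \<longrightarrow> fst \<theta> w = 0) \<and> l1_norm_par p \<theta> \<le> r}"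

definition obs :: "real \<Rightarrow> (real \<Rightarrow> real^'m) \<Rightarrow> real^'q \<Rightarrow> bool
    \<Rightarrow> ('m option list \<Rightarrow> real) \<times> (real^'q) \<times> bool" where
  "obs T x z y = (signature T x, z, y)"

definition obs_space :: "(('m option list \<Rightarrow> real) \<times> (real^'q) \<times> bool) measure" where
  "obs_space = (PiM UNIV (\<lambda>_. borel)) \<Otimes>\<^sub>M (borel \<Otimes>\<^sub>M count_space UNIV)"

end

theory Submission
  imports Defs
begin

text \<open>
  The increment Z \<theta> - Z \<eta> is an average of n independent centred variables. The logistic
  loss is 1-Lipschitz, so by Cauchy--Schwarz each of them lies in an interval of length
  2 (|S_p| + |z|) |\<theta> - \<eta>| / n, and Hoeffding's lemma gives the subgaussian bound as soon as
  the truncated signature S_p is bounded. That bound is the factorial decay of the signature: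
  with the control \<omega>(t) = |X|_TV[0,t] + t of the time-augmented path, the level-k part of the
  signature on [0, t] has Euclidean norm at most \<omega>(t)^k / k!, by induction on k through
  Riemann sums of the defining Riemann--Stieltjes integrals. Summing over the levels gives
  |S_p| \<le> exp \<omega>(T) \<le> exp (C_X + T).
\<close>

section \<open>Riemann--Stieltjes integrals against dominated integrators\<close>

definition fine_tagged_partition ::
    "real \<Rightarrow> real \<Rightarrow> nat \<Rightarrow> (nat \<Rightarrow> real) \<Rightarrow> (nat \<Rightarrow> real) \<Rightarrow> real \<Rightarrow> bool" where
  "fine_tagged_partition a b n t \<xi> \<delta> \<longleftrightarrow>
     t 0 = a \<and> t n = b \<and> (\<forall>i<n. t i \<le> \<xi> i \<and> \<xi> i \<le> t (Suc i) \<and> t (Suc i) - t i < \<delta>)"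

definition rs_sum ::
    "(real \<Rightarrow> real) \<Rightarrow> (real \<Rightarrow> real) \<Rightarrow> nat \<Rightarrow> (nat \<Rightarrow> real) \<Rightarrow> (nat \<Rightarrow> real) \<Rightarrow> real" where
  "rs_sum f g n t \<xi> = (\<Sum>i<n. f (\<xi> i) * (g (t (Suc i)) - g (t i)))"

definition increments_dominated :: "(real \<Rightarrow> real) \<Rightarrow> (real \<Rightarrow> real) \<Rightarrow> real \<Rightarrow> real \<Rightarrow> bool" where
  "increments_dominated g v a b \<longleftrightarrow>
     (\<forall>x y. a \<le> x \<longrightarrow> x \<le> y \<longrightarrow> y \<le> b \<longrightarrow> \<bar>g y - g x\<bar> \<le> v y - v x)"

definition uniform_grid :: "real \<Rightarrow> real \<Rightarrow> nat \<Rightarrow> nat \<Rightarrow> real" where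
  "uniform_grid a b N i = a + (b - a) * real i / real (Suc N)"

definition join_grids :: "nat \<Rightarrow> (nat \<Rightarrow> real) \<Rightarrow> (nat \<Rightarrow> real) \<Rightarrow> nat \<Rightarrow> real" where
  "join_grids n t t' i = (if i < n then t i else t' (i - n))"

text \<open>The increment of g over the intersection of the i-th cell of t with the k-th cell of u
  (zero if they do not overlap).\<close>
definition overlap_increment ::
    "(real \<Rightarrow> real) \<Rightarrow> (nat \<Rightarrow> real) \<Rightarrow> (nat \<Rightarrow> real) \<Rightarrow> nat \<Rightarrow> nat \<Rightarrow> real" where
  "overlap_increment g t u i k =
     g (max (t i) (min (t (Suc i)) (u (Suc k)))) - g (max (t i) (min (t (Suc i)) (u k)))"

lemma has_rs_integral_iff:
  "has_rs_integral f g a b L \<longleftrightarrow>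
     (\<forall>\<epsilon>>0. \<exists>\<delta>>0. \<forall>n t \<xi>. fine_tagged_partition a b n t \<xi> \<delta> \<longrightarrow> \<bar>rs_sum f g n t \<xi> - L\<bar> < \<epsilon>)"
  by (simp add: has_rs_integral_def fine_tagged_partition_def rs_sum_def)

lemma fine_tagged_partition_sorted:
  assumes P: "fine_tagged_partition a b n t \<xi> \<delta>" and "i \<le> j" "j \<le> n"
  shows "t i \<le> t j"
  using assms(2,3)
proof (induction j)
  case (Suc j)
  have "t j \<le> t (Suc j)"
    using P Suc.prems unfolding fine_tagged_partition_def by (meson Suc_le_lessD order_trans)
  with Suc show ?case by (cases "i = Suc j") auto
qed simp

lemma fine_tagged_partition_range:
  assumes P: "fine_tagged_partition a b n t \<xi> \<delta>" and "i \<le> n"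
  shows "a \<le> t i" "t i \<le> b"
  using fine_tagged_partition_sorted[OF P, of 0 i] fine_tagged_partition_sorted[OF P, of i n] P assms(2)
  unfolding fine_tagged_partition_def by auto

lemma fine_tagged_partition_mesh_mono:
  "fine_tagged_partition a b n t \<xi> \<delta> \<Longrightarrow> \<delta> \<le> \<delta>' \<Longrightarrow> fine_tagged_partition a b n t \<xi> \<delta>'"
  unfolding fine_tagged_partition_def by force

lemma increments_dominatedD:
  "increments_dominated g v a b \<Longrightarrow> a \<le> x \<Longrightarrow> x \<le> y \<Longrightarrow> y \<le> b \<Longrightarrow> \<bar>g y - g x\<bar> \<le> v y - v x"
  unfolding increments_dominated_def by blast

lemma increments_dominated_subinterval:
  "increments_dominated g v a b \<Longrightarrow> a \<le> a' \<Longrightarrow> b' \<le> b \<Longrightarrow> increments_dominated g v a' b'"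
  unfolding increments_dominated_def by force

lemma increments_dominated_imp_mono:
  "increments_dominated g v a b \<Longrightarrow> a \<le> x \<Longrightarrow> x \<le> y \<Longrightarrow> y \<le> b \<Longrightarrow> v x \<le> v y"
  unfolding increments_dominated_def by (meson abs_ge_zero diff_ge_0_iff_ge order_trans)

lemma fine_tagged_partition_uniform_grid:
  assumes "a \<le> b" "(b - a) / real (Suc N) < \<delta>"
  shows "fine_tagged_partition a b (Suc N) (uniform_grid a b N) (uniform_grid a b N) \<delta>"
proof -
  have step: "uniform_grid a b N (Suc i) - uniform_grid a b N i = (b - a) / real (Suc N)" for i
    unfolding uniform_grid_def by (simp add: diff_divide_distrib[symmetric] algebra_simps)
  moreover have "0 \<le> (b - a) / real (Suc N)" using assms by simp
  ultimately have "uniform_grid a b N i \<le> uniform_grid a b N (Suc i)" for i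
    by (metis diff_ge_0_iff_ge)
  moreover have "uniform_grid a b N 0 = a" "uniform_grid a b N (Suc N) = b"
    by (simp_all add: uniform_grid_def del: of_nat_Suc)
  ultimately show ?thesis
    using assms step unfolding fine_tagged_partition_def by auto
qed

lemma eventually_uniform_grid_fine:
  assumes "a \<le> b" "\<delta> > 0"
  shows "eventually (\<lambda>N. fine_tagged_partition a b (Suc N) (uniform_grid a b N) (uniform_grid a b N) \<delta>)
           sequentially"
proof -
  have "(\<lambda>N. (b - a) / real (Suc N)) \<longlonglongrightarrow> 0"
    using LIMSEQ_Suc[OF lim_const_over_n[of "b - a"]] by simp
  then have "eventually (\<lambda>N. (b - a) / real (Suc N) < \<delta>) sequentially"
    using assms(2) by (rule order_tendstoD)
  then show ?thesis
    by eventually_elim (rule fine_tagged_partition_uniform_grid[OF assms(1)])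
qed

lemma fine_tagged_partition_join:
  assumes P: "fine_tagged_partition a s n t \<xi> \<delta>" and Q: "fine_tagged_partition s u m t' \<xi>' \<delta>"
  shows "fine_tagged_partition a u (n + m) (join_grids n t t') (join_grids n \<xi> \<xi>') \<delta>"
  unfolding fine_tagged_partition_def
proof (intro conjI allI impI)
  show "join_grids n t t' 0 = a" "join_grids n t t' (n + m) = u"
    using P Q by (auto simp: join_grids_def fine_tagged_partition_def)
  fix i assume i: "i < n + m"
  consider "Suc i < n" | "Suc i = n" | "n \<le> i" by linarith
  then have "join_grids n t t' i \<le> join_grids n \<xi> \<xi>' i \<and> join_grids n \<xi> \<xi>' i \<le> join_grids n t t' (Suc i)
    \<and> join_grids n t t' (Suc i) - join_grids n t t' i < \<delta>"
  proof cases
    case 3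
    then have "i - n < m" "Suc i - n = Suc (i - n)" using i by auto
    then show ?thesis using Q 3 by (auto simp: join_grids_def fine_tagged_partition_def)
  qed (use P Q in \<open>auto simp: join_grids_def fine_tagged_partition_def\<close>)
  then show "join_grids n t t' i \<le> join_grids n \<xi> \<xi>' i" "join_grids n \<xi> \<xi>' i \<le> join_grids n t t' (Suc i)"
    "join_grids n t t' (Suc i) - join_grids n t t' i < \<delta>" by auto
qed

lemma rs_sum_join:
  assumes "t n = t' 0"
  shows "rs_sum f g (n + m) (join_grids n t t') (join_grids n \<xi> \<xi>') = rs_sum f g n t \<xi> + rs_sum f g m t' \<xi>'"
proof -
  have split: "(\<Sum>i<n + m. h i) = (\<Sum>i<n. h i) + (\<Sum>i<m. h (n + i))" for h :: "nat \<Rightarrow> real"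
    by (induction m) auto
  have "join_grids n t t' (Suc i) = t (Suc i)" if "i < n" for i
    using assms that by (cases "Suc i = n") (auto simp: join_grids_def)
  then show ?thesis
    unfolding rs_sum_def split by (simp add: join_grids_def)
qed

lemma sum_overlap_increment:
  assumes P: "fine_tagged_partition a b n t \<xi> \<delta>" and Q: "fine_tagged_partition a b m u \<eta> \<delta>'"
    and i: "i < n"
  shows "(\<Sum>k<m. overlap_increment g t u i k) = g (t (Suc i)) - g (t i)"
proof -
  have "a \<le> t i" "t i \<le> t (Suc i)" "t (Suc i) \<le> b"
    using fine_tagged_partition_range[OF P] fine_tagged_partition_sorted[OF P] i by auto
  moreover have "u 0 = a" "u m = b" using Q by (simp_all add: fine_tagged_partition_def)
  ultimately show ?thesis
    unfolding overlap_increment_def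
    by (subst sum_lessThan_telescope[where f = "\<lambda>k. g (max (t i) (min (t (Suc i)) (u k)))"]) simp
qed

lemma overlap_increment_swap:
  assumes "t i \<le> t (Suc i)" "u k \<le> u (Suc k)"
  shows "overlap_increment g t u i k = overlap_increment g u t k i"
  using assms unfolding overlap_increment_def by (smt (verit) min_def max_def)

lemma rs_sum_eq_overlap_sum:
  assumes P: "fine_tagged_partition a b n t \<xi> \<delta>" and Q: "fine_tagged_partition a b m u \<eta> \<delta>'"
  shows "rs_sum f g n t \<xi> = (\<Sum>i<n. \<Sum>k<m. f (\<xi> i) * overlap_increment g t u i k)"
    and "rs_sum f g m u \<eta> = (\<Sum>i<n. \<Sum>k<m. f (\<eta> k) * overlap_increment g t u i k)"
proof -
  show "rs_sum f g n t \<xi> = (\<Sum>i<n. \<Sum>k<m. f (\<xi> i) * overlap_increment g t u i k)"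
    unfolding rs_sum_def
    by (intro sum.cong refl) (simp add: sum_overlap_increment[OF P Q] flip: sum_distrib_left)
  have swapped: "(\<Sum>i<n. overlap_increment g t u i k) = g (u (Suc k)) - g (u k)" if k: "k < m" for k
  proof -
    have "(\<Sum>i<n. overlap_increment g t u i k) = (\<Sum>i<n. overlap_increment g u t k i)"
      using P Q k by (intro sum.cong refl overlap_increment_swap) (auto simp: fine_tagged_partition_def)
    also have "\<dots> = g (u (Suc k)) - g (u k)" by (rule sum_overlap_increment[OF Q P k])
    finally show ?thesis .
  qed
  have "rs_sum f g m u \<eta> = (\<Sum>k<m. \<Sum>i<n. f (\<eta> k) * overlap_increment g t u i k)"
    unfolding rs_sum_def by (intro sum.cong refl) (simp add: swapped flip: sum_distrib_left)
  then show "rs_sum f g m u \<eta> = (\<Sum>i<n. \<Sum>k<m. f (\<eta> k) * overlap_increment g t u i k)"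
    by (simp add: sum.swap[of _ "{..<m}"])
qed

text \<open>Only overlapping cells contribute, and their tags are less than 2 \<delta> apart.\<close>
lemma overlap_increment_term_le:
  assumes P: "fine_tagged_partition a b n t \<xi> \<delta>" and Q: "fine_tagged_partition a b m u \<eta> \<delta>"
    and dom: "increments_dominated g v a b"
    and osc: "\<forall>x\<in>{a..b}. \<forall>y\<in>{a..b}. \<bar>x - y\<bar> < 2 * \<delta> \<longrightarrow> \<bar>f x - f y\<bar> \<le> \<omega>"
    and i: "i < n" and k: "k < m"
  shows "\<bar>(f (\<xi> i) - f (\<eta> k)) * overlap_increment g t u i k\<bar> \<le> \<omega> * overlap_increment v t u i k"
proof -
  define c1 where "c1 = max (t i) (min (t (Suc i)) (u k))"
  define c2 where "c2 = max (t i) (min (t (Suc i)) (u (Suc k)))"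
  have t: "a \<le> t i" "t i \<le> \<xi> i" "\<xi> i \<le> t (Suc i)" "t (Suc i) - t i < \<delta>" "t (Suc i) \<le> b"
    using P i fine_tagged_partition_range[OF P, of i] fine_tagged_partition_range[OF P, of "Suc i"]
    by (auto simp: fine_tagged_partition_def)
  have u: "a \<le> u k" "u k \<le> \<eta> k" "\<eta> k \<le> u (Suc k)" "u (Suc k) - u k < \<delta>" "u (Suc k) \<le> b"
    using Q k fine_tagged_partition_range[OF Q, of k] fine_tagged_partition_range[OF Q, of "Suc k"]
    by (auto simp: fine_tagged_partition_def)
  have "a \<le> c1 \<and> c1 \<le> c2 \<and> c2 \<le> b"
    using t u unfolding c1_def c2_def by (smt (verit) min_def max_def)
  then have incr: "\<bar>overlap_increment g t u i k\<bar> \<le> overlap_increment v t u i k"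
    unfolding overlap_increment_def c1_def[symmetric] c2_def[symmetric]
    using increments_dominatedD[OF dom] by blast
  show ?thesis
  proof (cases "c1 = c2")
    case True
    then show ?thesis unfolding overlap_increment_def c1_def c2_def by simp
  next
    case False
    then have "u k < t (Suc i) \<and> t i < u (Suc k)"
      using t u unfolding c1_def c2_def by (smt (verit) min_def max_def)
    then have "\<bar>\<xi> i - \<eta> k\<bar> < 2 * \<delta>" "\<xi> i \<in> {a..b}" "\<eta> k \<in> {a..b}"
      using t u by auto
    then have "\<bar>f (\<xi> i) - f (\<eta> k)\<bar> \<le> \<omega>" using osc by blast
    with incr show ?thesis unfolding abs_mult by (intro mult_mono) auto
  qed
qed

lemma rs_sum_diff_le:
  assumes P: "fine_tagged_partition a b n t \<xi> \<delta>" and Q: "fine_tagged_partition a b m u \<eta> \<delta>"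
    and dom: "increments_dominated g v a b"
    and osc: "\<forall>x\<in>{a..b}. \<forall>y\<in>{a..b}. \<bar>x - y\<bar> < 2 * \<delta> \<longrightarrow> \<bar>f x - f y\<bar> \<le> \<omega>"
  shows "\<bar>rs_sum f g n t \<xi> - rs_sum f g m u \<eta>\<bar> \<le> \<omega> * (v b - v a)"
proof -
  have "\<bar>rs_sum f g n t \<xi> - rs_sum f g m u \<eta>\<bar>
      = \<bar>\<Sum>i<n. \<Sum>k<m. (f (\<xi> i) - f (\<eta> k)) * overlap_increment g t u i k\<bar>"
    unfolding rs_sum_eq_overlap_sum[OF P Q] by (simp add: sum_subtractf left_diff_distrib)
  also have "\<dots> \<le> (\<Sum>i<n. \<Sum>k<m. \<omega> * overlap_increment v t u i k)"
    by (intro order_trans[OF sum_abs] sum_mono) (use overlap_increment_term_le[OF P Q dom osc] in auto)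
  also have "\<dots> = (\<Sum>i<n. \<omega> * (v (t (Suc i)) - v (t i)))"
    by (intro sum.cong refl) (simp add: sum_overlap_increment[OF P Q] flip: sum_distrib_left)
  also have "\<dots> = \<omega> * (v b - v a)"
    using P by (simp add: sum_lessThan_telescope[of "\<lambda>i. v (t i)"] fine_tagged_partition_def
        flip: sum_distrib_left)
  finally show ?thesis .
qed

lemma continuous_on_Icc_modulus:
  fixes f :: "real \<Rightarrow> real"
  assumes "continuous_on {a..b} f" "\<omega> > 0"
  obtains d where "d > 0" "\<And>x y. x \<in> {a..b} \<Longrightarrow> y \<in> {a..b} \<Longrightarrow> \<bar>x - y\<bar> < d \<Longrightarrow> \<bar>f x - f y\<bar> \<le> \<omega>"
proof -
  have "uniformly_continuous_on {a..b} f" using assms(1) by (intro compact_uniformly_continuous) auto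
  then obtain d where "d > 0" "\<forall>x\<in>{a..b}. \<forall>y\<in>{a..b}. dist y x < d \<longrightarrow> dist (f y) (f x) < \<omega>"
    unfolding uniformly_continuous_on_def using assms(2) by meson
  then show ?thesis by (intro that[of d]) (auto simp: dist_real_def abs_minus_commute intro: less_imp_le)
qed

lemma rs_sum_cauchy:
  assumes f: "continuous_on {a..b} f" and dom: "increments_dominated g v a b"
    and ab: "a \<le> b" and \<epsilon>: "\<epsilon> > 0"
  shows "\<exists>\<delta>>0. \<forall>n t \<xi> m u \<eta>. fine_tagged_partition a b n t \<xi> \<delta> \<longrightarrow>
           fine_tagged_partition a b m u \<eta> \<delta> \<longrightarrow> \<bar>rs_sum f g n t \<xi> - rs_sum f g m u \<eta>\<bar> < \<epsilon>"
proof -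
  define V where "V = v b - v a"
  have V: "0 \<le> V" using increments_dominated_imp_mono[OF dom _ ab] unfolding V_def by simp
  define \<omega> where "\<omega> = \<epsilon> / (V + 1)"
  have \<omega>: "\<omega> > 0" using \<epsilon> V by (simp add: \<omega>_def)
  have "\<omega> * (V + 1) = \<epsilon>" using V by (simp add: \<omega>_def)
  with \<omega> have \<omega>V: "\<omega> * V < \<epsilon>" by (simp add: distrib_left)
  obtain d where d: "d > 0" "\<And>x y. x \<in> {a..b} \<Longrightarrow> y \<in> {a..b} \<Longrightarrow> \<bar>x - y\<bar> < d \<Longrightarrow> \<bar>f x - f y\<bar> \<le> \<omega>"
    using continuous_on_Icc_modulus[OF f \<omega>] by blast
  have osc: "\<forall>x\<in>{a..b}. \<forall>y\<in>{a..b}. \<bar>x - y\<bar> < 2 * (d / 2) \<longrightarrow> \<bar>f x - f y\<bar> \<le> \<omega>"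
    using d(2) by simp
  have "\<bar>rs_sum f g n t \<xi> - rs_sum f g m u \<eta>\<bar> < \<epsilon>"
    if "fine_tagged_partition a b n t \<xi> (d / 2)" "fine_tagged_partition a b m u \<eta> (d / 2)"
    for n t \<xi> m u \<eta>
  proof -
    have "\<bar>rs_sum f g n t \<xi> - rs_sum f g m u \<eta>\<bar> \<le> \<omega> * V"
      unfolding V_def by (rule rs_sum_diff_le[OF that dom osc])
    with \<omega>V show ?thesis by linarith
  qed
  then show ?thesis using d(1) by (intro exI[of _ "d / 2"]) auto
qed

lemma rs_integrable_continuous:
  assumes f: "continuous_on {a..b} f" and dom: "increments_dominated g v a b" and ab: "a \<le> b"
  shows "\<exists>L. has_rs_integral f g a b L"
proof -
  define s where "s N = rs_sum f g (Suc N) (uniform_grid a b N) (uniform_grid a b N)" for N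
  have "Cauchy s"
  proof (rule metric_CauchyI)
    fix \<epsilon> :: real assume "\<epsilon> > 0"
    then obtain \<delta> where \<delta>: "\<delta> > 0" "\<forall>n t \<xi> m u \<eta>. fine_tagged_partition a b n t \<xi> \<delta> \<longrightarrow>
        fine_tagged_partition a b m u \<eta> \<delta> \<longrightarrow> \<bar>rs_sum f g n t \<xi> - rs_sum f g m u \<eta>\<bar> < \<epsilon>"
      using rs_sum_cauchy[OF f dom ab] by blast
    obtain N0 where "\<forall>N\<ge>N0. fine_tagged_partition a b (Suc N) (uniform_grid a b N) (uniform_grid a b N) \<delta>"
      using eventually_uniform_grid_fine[OF ab \<delta>(1)] by (auto simp: eventually_sequentially)
    then show "\<exists>M. \<forall>m\<ge>M. \<forall>n\<ge>M. dist (s m) (s n) < \<epsilon>"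
      using \<delta>(2) unfolding s_def dist_real_def by blast
  qed
  then obtain L where L: "s \<longlonglongrightarrow> L" by (auto simp: Cauchy_convergent_iff convergent_def)
  have "has_rs_integral f g a b L"
    unfolding has_rs_integral_iff
  proof (intro allI impI)
    fix \<epsilon> :: real assume \<epsilon>: "\<epsilon> > 0"
    then obtain \<delta> where \<delta>: "\<delta> > 0" "\<forall>n t \<xi> m u \<eta>. fine_tagged_partition a b n t \<xi> \<delta> \<longrightarrow>
        fine_tagged_partition a b m u \<eta> \<delta> \<longrightarrow> \<bar>rs_sum f g n t \<xi> - rs_sum f g m u \<eta>\<bar> < \<epsilon> / 2"
      using rs_sum_cauchy[OF f dom ab, of "\<epsilon> / 2"] by auto
    have "eventually (\<lambda>N. dist (s N) L < \<epsilon> / 2) sequentially"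
      by (rule tendstoD[OF L]) (use \<epsilon> in simp)
    with eventually_uniform_grid_fine[OF ab \<delta>(1)]
    obtain N where N: "fine_tagged_partition a b (Suc N) (uniform_grid a b N) (uniform_grid a b N) \<delta>"
        "dist (s N) L < \<epsilon> / 2"
      using eventually_happens'[OF sequentially_bot eventually_conj] by blast
    have "\<bar>rs_sum f g n t \<xi> - L\<bar> < \<epsilon>" if "fine_tagged_partition a b n t \<xi> \<delta>" for n t \<xi>
    proof -
      have "\<bar>rs_sum f g n t \<xi> - s N\<bar> < \<epsilon> / 2" using \<delta>(2) N(1) that unfolding s_def by blast
      moreover have "\<bar>s N - L\<bar> < \<epsilon> / 2" using N(2) by (simp add: dist_real_def)
      ultimately show ?thesis by linarith
    qed
    then show "\<exists>\<delta>>0. \<forall>n t \<xi>. fine_tagged_partition a b n t \<xi> \<delta> \<longrightarrow> \<bar>rs_sum f g n t \<xi> - L\<bar> < \<epsilon>"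
      using \<delta>(1) by blast
  qed
  then show ?thesis ..
qed

lemma rs_sum_uniform_grid_tendsto:
  assumes L: "has_rs_integral f g a b L" and ab: "a \<le> b"
  shows "(\<lambda>N. rs_sum f g (Suc N) (uniform_grid a b N) (uniform_grid a b N)) \<longlonglongrightarrow> L"
proof (rule tendstoI)
  fix \<epsilon> :: real assume "\<epsilon> > 0"
  then obtain \<delta> where "\<delta> > 0"
      and \<delta>: "\<And>n t \<xi>. fine_tagged_partition a b n t \<xi> \<delta> \<Longrightarrow> \<bar>rs_sum f g n t \<xi> - L\<bar> < \<epsilon>"
    using has_rs_integral_iff[THEN iffD1, rule_format, OF L] by blast
  from eventually_uniform_grid_fine[OF ab \<open>\<delta> > 0\<close>]
  show "eventually (\<lambda>N. dist (rs_sum f g (Suc N) (uniform_grid a b N) (uniform_grid a b N)) L < \<epsilon>)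
          sequentially"
    by eventually_elim (simp add: \<delta> dist_real_def)
qed

lemma rs_integral_eqI:
  assumes "has_rs_integral f g a b L" "a \<le> b"
  shows "rs_integral f g a b = L"
  unfolding rs_integral_def
proof (rule the_equality)
  fix L' assume "has_rs_integral f g a b L'"
  from LIMSEQ_unique[OF rs_sum_uniform_grid_tendsto[OF this assms(2)] rs_sum_uniform_grid_tendsto[OF assms]]
  show "L' = L" .
qed fact

lemma has_rs_integral_rs_integral:
  assumes "continuous_on {a..b} f" "increments_dominated g v a b" "a \<le> b"
  shows "has_rs_integral f g a b (rs_integral f g a b)"
  using rs_integrable_continuous[OF assms] rs_integral_eqI[OF _ assms(3)] by metis

lemma has_rs_integral_abs_le:
  assumes I: "has_rs_integral f g a b I" and ab: "a \<le> b"
    and bound: "\<And>n t \<xi> \<delta>. fine_tagged_partition a b n t \<xi> \<delta> \<Longrightarrow> \<bar>rs_sum f g n t \<xi>\<bar> \<le> B"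
  shows "\<bar>I\<bar> \<le> B"
proof (rule LIMSEQ_le_const2)
  show "(\<lambda>N. \<bar>rs_sum f g (Suc N) (uniform_grid a b N) (uniform_grid a b N)\<bar>) \<longlonglongrightarrow> \<bar>I\<bar>"
    by (intro tendsto_rabs rs_sum_uniform_grid_tendsto[OF I ab])
  have "fine_tagged_partition a b (Suc N) (uniform_grid a b N) (uniform_grid a b N)
      ((b - a) / real (Suc N) + 1)" for N
    by (rule fine_tagged_partition_uniform_grid[OF ab]) simp
  then show "\<exists>N. \<forall>n\<ge>N. \<bar>rs_sum f g (Suc n) (uniform_grid a b n) (uniform_grid a b n)\<bar> \<le> B"
    using bound by blast
qed

text \<open>Prefix a fixed fine partition of [a, s] to the fine partitions of [s, u].\<close>
lemma has_rs_integral_tail: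
  assumes I1: "has_rs_integral f g a s I1" and I2: "has_rs_integral f g a u I2" and as: "a \<le> s"
  shows "has_rs_integral f g s u (I2 - I1)"
  unfolding has_rs_integral_iff
proof (intro allI impI)
  fix \<epsilon> :: real assume "\<epsilon> > 0"
  then have "\<epsilon> / 2 > 0" by simp
  obtain \<delta>1 where "\<delta>1 > 0"
      and \<delta>1: "\<And>n t \<xi>. fine_tagged_partition a s n t \<xi> \<delta>1 \<Longrightarrow> \<bar>rs_sum f g n t \<xi> - I1\<bar> < \<epsilon> / 2"
    using has_rs_integral_iff[THEN iffD1, rule_format, OF I1 \<open>\<epsilon> / 2 > 0\<close>] by blast
  obtain \<delta>2 where "\<delta>2 > 0"
      and \<delta>2: "\<And>n t \<xi>. fine_tagged_partition a u n t \<xi> \<delta>2 \<Longrightarrow> \<bar>rs_sum f g n t \<xi> - I2\<bar> < \<epsilon> / 2"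
    using has_rs_integral_iff[THEN iffD1, rule_format, OF I2 \<open>\<epsilon> / 2 > 0\<close>] by blast
  define \<delta> where "\<delta> = min \<delta>1 \<delta>2"
  have "\<delta> > 0" using \<open>\<delta>1 > 0\<close> \<open>\<delta>2 > 0\<close> by (simp add: \<delta>_def)
  then obtain N where Q: "fine_tagged_partition a s (Suc N) (uniform_grid a s N) (uniform_grid a s N) \<delta>"
    using eventually_happens'[OF sequentially_bot eventually_uniform_grid_fine[OF as]] by blast
  have "\<bar>rs_sum f g n t \<xi> - (I2 - I1)\<bar> < \<epsilon>" if P: "fine_tagged_partition s u n t \<xi> \<delta>" for n t \<xi>
  proof -
    have "uniform_grid a s N (Suc N) = t 0"
      using Q P by (simp add: fine_tagged_partition_def)
    then have "rs_sum f g (Suc N + n) (join_grids (Suc N) (uniform_grid a s N) t)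
        (join_grids (Suc N) (uniform_grid a s N) \<xi>)
      = rs_sum f g (Suc N) (uniform_grid a s N) (uniform_grid a s N) + rs_sum f g n t \<xi>"
      by (rule rs_sum_join)
    moreover have "\<bar>rs_sum f g (Suc N + n) (join_grids (Suc N) (uniform_grid a s N) t)
        (join_grids (Suc N) (uniform_grid a s N) \<xi>) - I2\<bar> < \<epsilon> / 2"
      by (intro \<delta>2 fine_tagged_partition_mesh_mono[OF fine_tagged_partition_join[OF Q P]])
         (simp add: \<delta>_def)
    moreover have "\<bar>rs_sum f g (Suc N) (uniform_grid a s N) (uniform_grid a s N) - I1\<bar> < \<epsilon> / 2"
      by (intro \<delta>1 fine_tagged_partition_mesh_mono[OF Q]) (simp add: \<delta>_def)
    ultimately show ?thesis by linarith
  qed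
  with \<open>\<delta> > 0\<close> show "\<exists>\<delta>>0. \<forall>n t \<xi>. fine_tagged_partition s u n t \<xi> \<delta> \<longrightarrow> \<bar>rs_sum f g n t \<xi> - (I2 - I1)\<bar> < \<epsilon>"
    by blast
qed

lemma rs_sum_abs_le:
  assumes P: "fine_tagged_partition s u n t \<xi> \<delta>" and dom: "increments_dominated g v s u"
    and osc: "\<forall>x\<in>{s..u}. \<bar>f x - f s\<bar> \<le> \<omega>"
  shows "\<bar>rs_sum f g n t \<xi>\<bar> \<le> \<bar>f s\<bar> * \<bar>g u - g s\<bar> + \<omega> * (v u - v s)"
proof -
  have t: "t 0 = s" "t n = u" using P by (simp_all add: fine_tagged_partition_def)
  have "\<bar>(f (\<xi> i) - f s) * (g (t (Suc i)) - g (t i))\<bar> \<le> \<omega> * (v (t (Suc i)) - v (t i))" if i: "i < n" for i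
  proof -
    have "s \<le> t i" "t i \<le> \<xi> i" "\<xi> i \<le> t (Suc i)" "t (Suc i) \<le> u"
      using P i fine_tagged_partition_range[OF P, of i] fine_tagged_partition_range[OF P, of "Suc i"]
      by (auto simp: fine_tagged_partition_def)
    then have "\<bar>f (\<xi> i) - f s\<bar> \<le> \<omega>" "\<bar>g (t (Suc i)) - g (t i)\<bar> \<le> v (t (Suc i)) - v (t i)"
      using osc increments_dominatedD[OF dom] by auto
    then show ?thesis unfolding abs_mult by (intro mult_mono) auto
  qed
  then have "\<bar>\<Sum>i<n. (f (\<xi> i) - f s) * (g (t (Suc i)) - g (t i))\<bar> \<le> (\<Sum>i<n. \<omega> * (v (t (Suc i)) - v (t i)))"
    by (intro order_trans[OF sum_abs] sum_mono) auto
  also have "\<dots> = \<omega> * (v u - v s)"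
    by (simp add: sum_lessThan_telescope[of "\<lambda>i. v (t i)"] t flip: sum_distrib_left)
  finally have rest: "\<bar>\<Sum>i<n. (f (\<xi> i) - f s) * (g (t (Suc i)) - g (t i))\<bar> \<le> \<omega> * (v u - v s)" .
  have "rs_sum f g n t \<xi> = (\<Sum>i<n. f s * (g (t (Suc i)) - g (t i)))
      + (\<Sum>i<n. (f (\<xi> i) - f s) * (g (t (Suc i)) - g (t i)))"
    unfolding rs_sum_def by (simp add: algebra_simps flip: sum.distrib)
  also have "(\<Sum>i<n. f s * (g (t (Suc i)) - g (t i))) = f s * (g u - g s)"
    by (simp add: sum_lessThan_telescope[of "\<lambda>i. g (t i)"] t flip: sum_distrib_left)
  finally have "\<bar>rs_sum f g n t \<xi>\<bar>
      = \<bar>f s * (g u - g s) + (\<Sum>i<n. (f (\<xi> i) - f s) * (g (t (Suc i)) - g (t i)))\<bar>" by simp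
  also have "\<dots> \<le> \<bar>f s\<bar> * \<bar>g u - g s\<bar> + \<bar>\<Sum>i<n. (f (\<xi> i) - f s) * (g (t (Suc i)) - g (t i))\<bar>"
    unfolding abs_mult[symmetric] by (rule abs_triangle_ineq)
  finally show ?thesis using rest by linarith
qed

lemma rs_integral_increment_le:
  assumes f: "continuous_on {a..b} f" and dom: "increments_dominated g v a b"
    and su: "a \<le> s" "s \<le> u" "u \<le> b"
    and B: "\<forall>x\<in>{a..b}. \<bar>f x\<bar> \<le> B" and osc: "\<forall>x\<in>{s..u}. \<bar>f x - f s\<bar> \<le> \<omega>"
  shows "\<bar>rs_integral f g a u - rs_integral f g a s\<bar> \<le> B * \<bar>g u - g s\<bar> + \<omega> * (v b - v a)"
proof -
  have "has_rs_integral f g a x (rs_integral f g a x)" if "a \<le> x" "x \<le> b" for x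
    using that by (intro has_rs_integral_rs_integral[of _ _ _ _ v] continuous_on_subset[OF f]
        increments_dominated_subinterval[OF dom]) auto
  then have I: "has_rs_integral f g s u (rs_integral f g a u - rs_integral f g a s)"
    using su by (intro has_rs_integral_tail) auto
  have bound: "\<bar>f s\<bar> * \<bar>g u - g s\<bar> + \<omega> * (v u - v s) \<le> B * \<bar>g u - g s\<bar> + \<omega> * (v b - v a)"
  proof (rule add_mono)
    show "\<bar>f s\<bar> * \<bar>g u - g s\<bar> \<le> B * \<bar>g u - g s\<bar>" using B su by (intro mult_right_mono) auto
    have "0 \<le> \<omega>" using osc su(2) by force
    moreover have "v u - v s \<le> v b - v a"
      using increments_dominated_imp_mono[OF dom, of a s] increments_dominated_imp_mono[OF dom, of u b] su
      by auto
    ultimately show "\<omega> * (v u - v s) \<le> \<omega> * (v b - v a)" by (simp add: mult_left_mono)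
  qed
  have sums: "\<bar>rs_sum f g n t \<xi>\<bar> \<le> \<bar>f s\<bar> * \<bar>g u - g s\<bar> + \<omega> * (v u - v s)"
    if "fine_tagged_partition s u n t \<xi> \<delta>" for n t \<xi> \<delta>
    using that increments_dominated_subinterval[OF dom su(1)] su(3) osc by (intro rs_sum_abs_le) auto
  show ?thesis by (rule has_rs_integral_abs_le[OF I su(2) order_trans[OF sums bound]])
qed

text \<open>Continuity comes from that of g and the oscillation of f; the dominating function v
  need not be continuous.\<close>
lemma continuous_on_rs_integral:
  assumes f: "continuous_on {a..b} f" and g: "continuous_on {a..b} g"
    and dom: "increments_dominated g v a b"
  shows "continuous_on {a..b} (\<lambda>t. rs_integral f g a t)"
  unfolding continuous_on_iff
proof (intro ballI allI impI)
  fix t \<epsilon> :: real assume t: "t \<in> {a..b}" and \<epsilon>: "\<epsilon> > 0"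
  obtain B where B: "\<forall>x\<in>{a..b}. \<bar>f x\<bar> \<le> B"
    using compact_imp_bounded[OF compact_continuous_image[OF f compact_Icc]]
    unfolding bounded_iff by auto
  then have B0: "0 \<le> B" using t by force
  define V where "V = v b - v a"
  have V0: "0 \<le> V" using increments_dominated_imp_mono[OF dom, of a b] t by (auto simp: V_def)
  define \<omega> where "\<omega> = \<epsilon> / (2 * (V + 1))"
  have \<omega>: "\<omega> > 0" using \<epsilon> V0 by (simp add: \<omega>_def)
  have "\<omega> * (V + 1) = \<epsilon> / 2" using V0 by (simp add: \<omega>_def field_simps)
  with \<omega> have \<omega>V: "\<omega> * V < \<epsilon> / 2" by (simp add: distrib_left)
  obtain d2 where d2: "d2 > 0"
      "\<And>x y. x \<in> {a..b} \<Longrightarrow> y \<in> {a..b} \<Longrightarrow> \<bar>x - y\<bar> < d2 \<Longrightarrow> \<bar>f x - f y\<bar> \<le> \<omega>"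
    using continuous_on_Icc_modulus[OF f \<omega>] by blast
  have "\<epsilon> / (2 * (B + 1)) > 0" using \<epsilon> B0 by simp
  then obtain d1 where d1: "d1 > 0"
      "\<forall>y\<in>{a..b}. dist y t < d1 \<longrightarrow> dist (g y) (g t) < \<epsilon> / (2 * (B + 1))"
    using g t unfolding continuous_on_iff by meson
  show "\<exists>d>0. \<forall>t'\<in>{a..b}. dist t' t < d \<longrightarrow> dist (rs_integral f g a t') (rs_integral f g a t) < \<epsilon>"
  proof (intro exI[of _ "min d1 d2"] conjI ballI impI)
    show "min d1 d2 > 0" using d1 d2 by simp
    fix t' assume t': "t' \<in> {a..b}" and near: "dist t' t < min d1 d2"
    define s where "s = min t t'"
    define u where "u = max t t'"
    have su: "a \<le> s" "s \<le> u" "u \<le> b" using t t' by (auto simp: s_def u_def)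
    have osc: "\<forall>x\<in>{s..u}. \<bar>f x - f s\<bar> \<le> \<omega>"
    proof
      fix x assume "x \<in> {s..u}"
      then show "\<bar>f x - f s\<bar> \<le> \<omega>"
        using su near by (intro d2(2)) (auto simp: s_def u_def dist_real_def)
    qed
    have "\<bar>g u - g s\<bar> = \<bar>g t' - g t\<bar>"
      by (cases "t \<le> t'") (simp_all add: s_def u_def abs_minus_commute)
    also have "\<dots> < \<epsilon> / (2 * (B + 1))" using d1(2) t' near by (simp add: dist_real_def)
    finally have "B * \<bar>g u - g s\<bar> \<le> B * (\<epsilon> / (2 * (B + 1)))" using B0 by (intro mult_left_mono) auto
    also have "\<dots> < \<epsilon> / 2" using B0 \<epsilon> by (simp add: field_simps)
    finally have "\<bar>rs_integral f g a u - rs_integral f g a s\<bar> < \<epsilon>"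
      using rs_integral_increment_le[OF f dom su B osc] \<omega>V unfolding V_def by linarith
    moreover have "dist (rs_integral f g a t') (rs_integral f g a t)
        = \<bar>rs_integral f g a u - rs_integral f g a s\<bar>"
      by (cases "t \<le> t'") (simp_all add: s_def u_def dist_real_def abs_minus_commute)
    ultimately show "dist (rs_integral f g a t') (rs_integral f g a t) < \<epsilon>" by simp
  qed
qed

section \<open>Total variation and the control of the time-augmented path\<close>

lemma variation_sums_extend:
  assumes y: "y \<in> variation_sums x a b" and bc: "b \<le> c"
  shows "y + norm (x c - x b) \<in> variation_sums x a c"
proof -
  obtain n t where y: "y = (\<Sum>i<n. norm (x (t (Suc i)) - x (t i)))"
      and t: "t 0 = a" "t n = b" "\<forall>i<n. t i \<le> t (Suc i)"
    using y unfolding variation_sums_def by blast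
  define t' where "t' = t(Suc n := c)"
  have "y + norm (x c - x b) = (\<Sum>i<Suc n. norm (x (t' (Suc i)) - x (t' i)))"
    using y t by (simp add: t'_def)
  moreover have "t' 0 = a" "t' (Suc n) = c" "\<forall>i<Suc n. t' i \<le> t' (Suc i)"
    using t bc by (auto simp: t'_def less_Suc_eq)
  ultimately show ?thesis
    unfolding variation_sums_def by (intro CollectI exI[of _ "Suc n"] exI[of _ t']) simp
qed

lemma variation_sums_nonempty:
  assumes "a \<le> b"
  shows "variation_sums x a b \<noteq> {}"
proof -
  define t where "t i = (if i = 0 then a else b)" for i :: nat
  have "(\<Sum>i<1. norm (x (t (Suc i)) - x (t i))) \<in> variation_sums x a b"
    unfolding variation_sums_def using assms by (auto simp: t_def intro!: exI[of _ 1] exI[of _ t])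
  then show ?thesis by blast
qed

lemma bdd_above_variation_sums:
  assumes bv: "bounded_variation x a b" and "s \<le> b"
  shows "bdd_above (variation_sums x a s)"
proof -
  obtain B where B: "\<And>y. y \<in> variation_sums x a b \<Longrightarrow> y \<le> B"
    using bv unfolding bounded_variation_def bdd_above_def by blast
  have "y \<le> B" if "y \<in> variation_sums x a s" for y
    using B[OF variation_sums_extend[OF that \<open>s \<le> b\<close>]] norm_ge_zero[of "x b - x s"] by linarith
  then show ?thesis unfolding bdd_above_def by blast
qed

lemma total_variation_nonneg:
  assumes "bounded_variation x a b" "a \<le> s" "s \<le> b"
  shows "0 \<le> total_variation x a s"
proof -
  obtain y where y: "y \<in> variation_sums x a s" using variation_sums_nonempty[OF assms(2)] by blast
  have "0 \<le> y" using y unfolding variation_sums_def by (auto intro: sum_nonneg)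
  also have "y \<le> total_variation x a s"
    unfolding total_variation_def by (rule cSup_upper[OF y bdd_above_variation_sums[OF assms(1,3)]])
  finally show ?thesis .
qed

lemma total_variation_increment:
  assumes bv: "bounded_variation x a b" and "a \<le> s" "s \<le> s'" "s' \<le> b"
  shows "total_variation x a s + norm (x s' - x s) \<le> total_variation x a s'"
proof -
  have "Sup (variation_sums x a s) \<le> Sup (variation_sums x a s') - norm (x s' - x s)"
  proof (rule cSup_least[OF variation_sums_nonempty[OF \<open>a \<le> s\<close>]])
    fix y assume "y \<in> variation_sums x a s"
    from cSup_upper[OF variation_sums_extend[OF this \<open>s \<le> s'\<close>] bdd_above_variation_sums[OF bv \<open>s' \<le> b\<close>]]
    show "y \<le> Sup (variation_sums x a s') - norm (x s' - x s)" by simp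
  qed
  then show ?thesis unfolding total_variation_def by simp
qed

definition aug_control :: "(real \<Rightarrow> real^'m) \<Rightarrow> real \<Rightarrow> real" where
  "aug_control x s = total_variation x 0 s + s"

lemma aug_control_increment:
  assumes "bounded_variation x 0 T" "0 \<le> s" "s \<le> s'" "s' \<le> T"
  shows "norm (x s' - x s) + (s' - s) \<le> aug_control x s' - aug_control x s"
  using total_variation_increment[OF assms] by (simp add: aug_control_def)

lemma aug_control_nonneg:
  assumes "bounded_variation x 0 T" "0 \<le> s" "s \<le> T"
  shows "0 \<le> aug_control x s"
  using total_variation_nonneg[OF assms] assms(2) by (simp add: aug_control_def)

lemma aug_control_mono:
  assumes "bounded_variation x 0 T" "0 \<le> s" "s \<le> s'" "s' \<le> T"
  shows "aug_control x s \<le> aug_control x s'"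
  using aug_control_increment[OF assms] norm_ge_zero[of "x s' - x s"] assms(3) by linarith

lemma increments_dominated_aug:
  assumes bv: "bounded_variation x 0 T"
  shows "increments_dominated (\<lambda>s. aug x s j) (aug_control x) 0 T"
  unfolding increments_dominated_def
proof (intro allI impI)
  fix s s' :: real assume s: "0 \<le> s" "s \<le> s'" "s' \<le> T"
  have "\<bar>aug x s' j - aug x s j\<bar> \<le> norm (x s' - x s) + (s' - s)"
  proof (cases j)
    case (Some i)
    then show ?thesis
      using component_le_norm_cart[of "x s' - x s" i] s by (simp add: aug_def)
  qed (use s in \<open>simp add: aug_def\<close>)
  also have "\<dots> \<le> aug_control x s' - aug_control x s" by (rule aug_control_increment[OF bv s])
  finally show "\<bar>aug x s' j - aug x s j\<bar> \<le> aug_control x s' - aug_control x s" .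
qed

lemma continuous_on_aug:
  assumes "continuous_on S x"
  shows "continuous_on S (\<lambda>s. aug x s j)"
  unfolding aug_def by (cases j) (auto intro: continuous_on_component assms)

lemma L2_set_aug_increment_le:
  assumes "bounded_variation x 0 T" "0 \<le> s" "s \<le> s'" "s' \<le> T"
  shows "L2_set (\<lambda>j. aug x s' j - aug x s j) UNIV \<le> aug_control x s' - aug_control x s"
proof -
  have "(\<Sum>j\<in>UNIV. (aug x s' j - aug x s j)\<^sup>2) = (s' - s)\<^sup>2 + (\<Sum>i\<in>UNIV. (x s' $ i - x s $ i)\<^sup>2)"
    unfolding UNIV_option_conv by (simp add: sum.reindex aug_def)
  also have "(\<Sum>i\<in>UNIV. (x s' $ i - x s $ i)\<^sup>2) = (norm (x s' - x s))\<^sup>2"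
    unfolding norm_vec_def L2_set_def by (simp add: sum_nonneg)
  finally have "L2_set (\<lambda>j. aug x s' j - aug x s j) UNIV = sqrt ((s' - s)\<^sup>2 + (norm (x s' - x s))\<^sup>2)"
    unfolding L2_set_def by simp
  also have "\<dots> \<le> (s' - s) + norm (x s' - x s)" by (rule sqrt_sum_squares_le_sum) (use assms in auto)
  also have "\<dots> \<le> aug_control x s' - aug_control x s" using aug_control_increment[OF assms] by simp
  finally show ?thesis .
qed

lemma continuous_on_sig_rev:
  assumes "continuous_on {0..T} x" "bounded_variation x 0 T"
  shows "continuous_on {0..T} (sig_rev x rw)"
proof (induction rw)
  case (Cons j rw)
  then show ?case
    using continuous_on_rs_integral[OF Cons continuous_on_aug[OF assms(1)]
        increments_dominated_aug[OF assms(2)]]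
    by simp
qed simp

section \<open>Factorial decay of the signature\<close>

lemma L2_set_sum_le:
  assumes "finite I"
  shows "L2_set (\<lambda>p. \<Sum>i\<in>I. h i p) A \<le> (\<Sum>i\<in>I. L2_set (h i) A)"
  using assms
proof (induction I rule: finite_induct)
  case (insert i I)
  then have "L2_set (\<lambda>p. \<Sum>i\<in>insert i I. h i p) A = L2_set (\<lambda>p. h i p + (\<Sum>i\<in>I. h i p)) A"
    by simp
  also have "\<dots> \<le> L2_set (h i) A + L2_set (\<lambda>p. \<Sum>i\<in>I. h i p) A" by (rule L2_set_triangle_ineq)
  also have "\<dots> \<le> L2_set (h i) A + (\<Sum>i\<in>I. L2_set (h i) A)" using insert by simp
  finally show ?case using insert by simp
qed (simp add: L2_set_0')

lemma L2_set_times: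
  assumes "finite A" "finite B"
  shows "L2_set (\<lambda>p. f (fst p) * g (snd p)) (A \<times> B) = L2_set f A * L2_set g B"
proof -
  have "(\<Sum>p\<in>A \<times> B. (f (fst p) * g (snd p))\<^sup>2) = (\<Sum>a\<in>A. (f a)\<^sup>2) * (\<Sum>b\<in>B. (g b)\<^sup>2)"
    by (simp add: sum.cartesian_product power_mult_distrib case_prod_unfold sum_product)
  then show ?thesis unfolding L2_set_def by (simp add: real_sqrt_mult)
qed

lemma power_div_fact_increment_le:
  fixes a b :: real
  assumes "0 \<le> a" "a \<le> b"
  shows "a ^ k / fact k * (b - a) \<le> b ^ Suc k / fact (Suc k) - a ^ Suc k / fact (Suc k)"
proof -
  have "real (Suc k) * a ^ k = (\<Sum>i<Suc k. a ^ (k - i) * a ^ i)"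
    by (simp add: power_add[symmetric])
  also have "\<dots> \<le> (\<Sum>i<Suc k. a ^ (k - i) * b ^ i)"
    using assms by (intro sum_mono mult_left_mono power_mono) auto
  finally have "real (Suc k) * a ^ k * (b - a) \<le> (b - a) * (\<Sum>i<Suc k. a ^ (Suc k - Suc i) * b ^ i)"
    using assms by (simp add: mult.commute mult_left_mono)
  also have "\<dots> = b ^ Suc k - a ^ Suc k" by (rule power_diff_sumr2[symmetric])
  finally have "real (Suc k) * a ^ k * (b - a) / fact (Suc k) \<le> (b ^ Suc k - a ^ Suc k) / fact (Suc k)"
    by (intro divide_right_mono) auto
  then show ?thesis by (simp add: diff_divide_distrib fact_Suc[of k] mult.assoc)
qed

lemma sum_power_div_fact_le_exp:
  fixes y :: real
  assumes "0 \<le> y"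
  shows "(\<Sum>k\<le>p. y ^ k / fact k) \<le> exp y"
proof -
  have sums: "(\<lambda>k. y ^ k / fact k) sums exp y"
    using exp_converges[of y] by (simp add: divide_inverse mult.commute)
  have "(\<Sum>k\<le>p. y ^ k / fact k) \<le> suminf (\<lambda>k. y ^ k / fact k)"
    by (rule sum_le_suminf[OF sums_summable[OF sums]]) (use assms in auto)
  then show ?thesis using sums_unique[OF sums] by simp
qed

lemma lists_length_Suc_eq:
  "{w. length w = Suc k} = (\<lambda>p. fst p # snd p) ` (UNIV \<times> {w. length w = k})"
  by (auto simp: length_Suc_conv image_iff)

text \<open>On a left-tagged partition the Riemann--Stieltjes sums of the next level are a sum of
  rank-one tensors, whose integrator factors have norm at most the increments of the control.\<close>
lemma L2_rs_sum_aug_le: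
  fixes x :: "real \<Rightarrow> real^'m" and F :: "'w \<Rightarrow> real \<Rightarrow> real"
  assumes bv: "bounded_variation x 0 T" and W: "finite W"
    and F: "\<And>s. 0 \<le> s \<Longrightarrow> s \<le> T \<Longrightarrow> L2_set (\<lambda>w. F w s) W \<le> aug_control x s ^ k / fact k"
    and P: "fine_tagged_partition 0 t n u u \<delta>" and "t \<le> T"
  shows "L2_set (\<lambda>p. rs_sum (F (snd p)) (\<lambda>s. aug x s (fst p)) n u u) (UNIV \<times> W)
           \<le> aug_control x t ^ Suc k / fact (Suc k)"
proof -
  define L where "L i = aug_control x (u i)" for i
  have u: "0 \<le> u i" "u i \<le> u (Suc i)" "u (Suc i) \<le> T" "u i \<le> T" if "i < n" for i
    using fine_tagged_partition_range[OF P, of i] fine_tagged_partition_range[OF P, of "Suc i"] P that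
      \<open>t \<le> T\<close> by (auto simp: fine_tagged_partition_def)
  have L: "0 \<le> L i" "L i \<le> L (Suc i)" if "i < n" for i
    using aug_control_nonneg[OF bv] aug_control_mono[OF bv] u[OF that] by (auto simp: L_def)
  have "L2_set (\<lambda>p. rs_sum (F (snd p)) (\<lambda>s. aug x s (fst p)) n u u) (UNIV \<times> W)
      = L2_set (\<lambda>p. \<Sum>i<n. (aug x (u (Suc i)) (fst p) - aug x (u i) (fst p)) * F (snd p) (u i)) (UNIV \<times> W)"
    unfolding rs_sum_def by (simp add: mult.commute)
  also have "\<dots> \<le> (\<Sum>i<n. L2_set (\<lambda>p. (aug x (u (Suc i)) (fst p) - aug x (u i) (fst p)) * F (snd p) (u i))
      (UNIV \<times> W))"
    by (rule L2_set_sum_le) simp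
  also have "\<dots> = (\<Sum>i<n. L2_set (\<lambda>j. aug x (u (Suc i)) j - aug x (u i) j) UNIV * L2_set (\<lambda>w. F w (u i)) W)"
  proof (rule sum.cong[OF refl])
    fix i
    show "L2_set (\<lambda>p. (aug x (u (Suc i)) (fst p) - aug x (u i) (fst p)) * F (snd p) (u i)) (UNIV \<times> W)
        = L2_set (\<lambda>j. aug x (u (Suc i)) j - aug x (u i) j) UNIV * L2_set (\<lambda>w. F w (u i)) W"
      using L2_set_times[OF finite_class.finite_UNIV W, where f = "\<lambda>j. aug x (u (Suc i)) j - aug x (u i) j"
          and g = "\<lambda>w. F w (u i)"] by simp
  qed
  also have "\<dots> \<le> (\<Sum>i<n. (L (Suc i) - L i) * (L i ^ k / fact k))"
    using L2_set_aug_increment_le[OF bv u(1-3)] F[OF u(1,4)] L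
    by (intro sum_mono mult_mono) (auto simp: L_def)
  also have "\<dots> \<le> (\<Sum>i<n. L (Suc i) ^ Suc k / fact (Suc k) - L i ^ Suc k / fact (Suc k))"
  proof (rule sum_mono)
    fix i assume "i \<in> {..<n}"
    then have "L i ^ k / fact k * (L (Suc i) - L i)
        \<le> L (Suc i) ^ Suc k / fact (Suc k) - L i ^ Suc k / fact (Suc k)"
      using L by (intro power_div_fact_increment_le) auto
    then show "(L (Suc i) - L i) * (L i ^ k / fact k)
        \<le> L (Suc i) ^ Suc k / fact (Suc k) - L i ^ Suc k / fact (Suc k)"
      by (simp only: mult.commute)
  qed
  also have "\<dots> = L n ^ Suc k / fact (Suc k) - L 0 ^ Suc k / fact (Suc k)"
    by (rule sum_lessThan_telescope)
  also have "\<dots> \<le> aug_control x t ^ Suc k / fact (Suc k)"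
    using P aug_control_nonneg[OF bv, of 0] \<open>t \<le> T\<close> fine_tagged_partition_range[OF P, of n]
    by (simp add: L_def fine_tagged_partition_def)
  finally show ?thesis .
qed

lemma L2_sig_rev_level_le:
  fixes x :: "real \<Rightarrow> real^'m"
  assumes c: "continuous_on {0..T} x" and bv: "bounded_variation x 0 T" and "0 \<le> t" "t \<le> T"
  shows "L2_set (\<lambda>w. sig_rev x w t) {w. length w = k} \<le> aug_control x t ^ k / fact k"
  using assms(3,4)
proof (induction k arbitrary: t)
  case 0
  have "{w :: 'm option list. length w = 0} = {[]}" by auto
  then show ?case by simp
next
  case (Suc k)
  define W where "W = {w :: 'm option list. length w = k}"
  have W: "finite W" unfolding W_def using finite_lists_length_eq[of "UNIV :: 'm option set" k] by simp
  define S where "S N p = rs_sum (sig_rev x (snd p)) (\<lambda>s. aug x s (fst p)) (Suc N) (uniform_grid 0 t N)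
      (uniform_grid 0 t N)" for N and p :: "'m option \<times> 'm option list"
  have "(\<lambda>N. S N p) \<longlonglongrightarrow> sig_rev x (fst p # snd p) t" for p
  proof -
    have "has_rs_integral (sig_rev x (snd p)) (\<lambda>s. aug x s (fst p)) 0 t
        (rs_integral (sig_rev x (snd p)) (\<lambda>s. aug x s (fst p)) 0 t)"
      using Suc.prems
      by (intro has_rs_integral_rs_integral[where v = "aug_control x"]
          continuous_on_subset[OF continuous_on_sig_rev[OF c bv]]
          increments_dominated_subinterval[OF increments_dominated_aug[OF bv]]) auto
    from rs_sum_uniform_grid_tendsto[OF this] Suc.prems show ?thesis unfolding S_def by simp
  qed
  then have "(\<lambda>N. L2_set (S N) (UNIV \<times> W)) \<longlonglongrightarrow> L2_set (\<lambda>p. sig_rev x (fst p # snd p) t) (UNIV \<times> W)"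
    unfolding L2_set_def by (intro tendsto_intros)
  moreover have "L2_set (S N) (UNIV \<times> W) \<le> aug_control x t ^ Suc k / fact (Suc k)" for N
    unfolding S_def
    by (rule L2_rs_sum_aug_le[OF bv W _
          fine_tagged_partition_uniform_grid[of 0 t N "t / real (Suc N) + 1"]])
       (use Suc in \<open>auto simp: W_def\<close>)
  ultimately have "L2_set (\<lambda>p. sig_rev x (fst p # snd p) t) (UNIV \<times> W)
      \<le> aug_control x t ^ Suc k / fact (Suc k)"
    by (intro LIMSEQ_le_const2) auto
  moreover have "inj_on (\<lambda>p. fst p # snd p) (UNIV \<times> W)" by (auto simp: inj_on_def)
  ultimately show ?case
    unfolding lists_length_Suc_eq W_def[symmetric] L2_set_def by (simp add: sum.reindex)
qed

lemma L2_signature_le_exp: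
  fixes x :: "real \<Rightarrow> real^'m"
  assumes c: "continuous_on {0..T} x" and bv: "bounded_variation x 0 T" and "0 \<le> T"
  shows "L2_set (signature T x) (words p) \<le> exp (total_variation x 0 T + T)"
proof -
  define level where "level k = {w :: 'm option list. length w = k}" for k
  have fin: "finite (level k)" for k
    unfolding level_def using finite_lists_length_eq[of "UNIV :: 'm option set" k] by simp
  have fin_words: "finite (words p :: 'm option list set)"
    unfolding words_def using finite_lists_length_le[of "UNIV :: 'm option set" p] by simp
  have "rev ` words p = words p"
    unfolding words_def by (auto intro: image_eqI[of _ rev, OF rev_rev_ident[symmetric]])
  then have "L2_set (signature T x) (words p) = L2_set (\<lambda>w. sig_rev x w T) (words p)"
    unfolding L2_set_def signature_def
    by (metis (no_types, lifting) inj_on_def rev_rev_ident sum.reindex_cong)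
  also have "\<dots> = L2_set (\<lambda>k. L2_set (\<lambda>w. sig_rev x w T) (level k)) {..p}"
  proof -
    have "{w \<in> words p. length w = k} = level k" if "k \<in> {..p}" for k
      using that by (auto simp: words_def level_def)
    then have "(\<Sum>k\<le>p. \<Sum>w\<in>level k. (sig_rev x w T)\<^sup>2)
        = (\<Sum>k\<le>p. \<Sum>w\<in>{w \<in> words p. length w = k}. (sig_rev x w T)\<^sup>2)"
      by (intro sum.cong) auto
    also have "\<dots> = (\<Sum>w\<in>words p. (sig_rev x w T)\<^sup>2)"
      by (rule sum.group[OF fin_words finite_atMost]) (auto simp: words_def)
    finally have "(\<Sum>w\<in>words p. (sig_rev x w T)\<^sup>2) = (\<Sum>k\<le>p. \<Sum>w\<in>level k. (sig_rev x w T)\<^sup>2)" ..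
    then show ?thesis unfolding L2_set_def by (simp add: sum_nonneg)
  qed
  also have "\<dots> \<le> (\<Sum>k\<le>p. L2_set (\<lambda>w. sig_rev x w T) (level k))" by (rule L2_set_le_sum) simp
  also have "\<dots> \<le> (\<Sum>k\<le>p. aug_control x T ^ k / fact k)"
    using L2_sig_rev_level_le[OF c bv \<open>0 \<le> T\<close>] by (intro sum_mono) (simp add: level_def)
  also have "\<dots> \<le> exp (aug_control x T)"
    by (rule sum_power_div_fact_le_exp[OF aug_control_nonneg[OF bv \<open>0 \<le> T\<close> order_refl]])
  finally show ?thesis by (simp add: aug_control_def)
qed

section \<open>Hoeffding's lemma for sums of independent bounded variables\<close>

lemma (in interval_bounded_random_variable) Hoeffdings_lemma_nn_integral_any_sign:
  "(\<integral>\<^sup>+x. ennreal (exp (l * (f x - expectation f))) \<partial>M) \<le> ennreal (exp (l\<^sup>2 * (b - a)\<^sup>2 / 8))"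
proof -
  consider "l > 0" | "l < 0" | "l = 0" by linarith
  then show ?thesis
  proof cases
    case 1
    then show ?thesis by (rule Hoeffdings_lemma_nn_integral)
  next
    case 2
    interpret neg: interval_bounded_random_variable M "\<lambda>x. - f x" "- b" "- a"
      by unfold_locales (auto intro: eventually_mono[OF AE_in_interval])
    from neg.Hoeffdings_lemma_nn_integral[of "- l"] 2 show ?thesis
      by (simp add: algebra_simps)
  qed (simp add: emeasure_space_1)
qed

lemma (in indep_interval_bounded_random_variables) expectation_exp_sum_centered_le:
  "expectation (\<lambda>x. exp (l * (\<Sum>i\<in>I. X i x - expectation (X i))))
     \<le> exp (l\<^sup>2 * (\<Sum>i\<in>I. (b i - a i)\<^sup>2) / 8)"
proof -
  have "(\<integral>\<^sup>+x. ennreal (exp (l * (\<Sum>i\<in>I. X i x - expectation (X i)))) \<partial>M)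
      = (\<integral>\<^sup>+x. (\<Prod>i\<in>I. ennreal (exp (l * (X i x - expectation (X i))))) \<partial>M)"
    by (simp add: sum_distrib_left exp_sum fin prod_ennreal)
  also have "\<dots> = (\<Prod>i\<in>I. \<integral>\<^sup>+x. ennreal (exp (l * (X i x - expectation (X i)))) \<partial>M)"
    by (intro indep_vars_nn_integral fin indep_vars_compose2[OF indep]) auto
  also have "\<dots> \<le> (\<Prod>i\<in>I. ennreal (exp (l\<^sup>2 * (b i - a i)\<^sup>2 / 8)))"
  proof (rule prod_mono_ennreal)
    fix i assume "i \<in> I"
    then interpret interval_bounded_random_variable M "X i" "a i" "b i" ..
    show "(\<integral>\<^sup>+x. ennreal (exp (l * (X i x - expectation (X i)))) \<partial>M)
        \<le> ennreal (exp (l\<^sup>2 * (b i - a i)\<^sup>2 / 8))"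
      by (rule Hoeffdings_lemma_nn_integral_any_sign)
  qed
  also have "\<dots> = ennreal (exp (l\<^sup>2 * (\<Sum>i\<in>I. (b i - a i)\<^sup>2) / 8))"
    by (simp add: prod_ennreal exp_sum fin sum_distrib_left sum_divide_distrib)
  finally show ?thesis
    by (subst integral_eq_nn_integral) (auto intro!: enn2real_leI)
qed

section \<open>Empirical processes of identically distributed samples\<close>

lemma AE_identically_distributed:
  assumes "X \<in> M \<rightarrow>\<^sub>M S" "Y \<in> M \<rightarrow>\<^sub>M S" "distr M S X = distr M S Y" "G \<in> sets S"
    and "AE \<omega> in M. Y \<omega> \<in> G"
  shows "AE \<omega> in M. X \<omega> \<in> G"
proof -
  have G: "{s \<in> space S. s \<in> G} \<in> sets S" using assms(4) by (simp add: sets.Int_space_eq1)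
  from assms(5) have "AE s in distr M S Y. s \<in> G" by (simp add: AE_distr_iff[OF assms(2) G])
  then have "AE s in distr M S X. s \<in> G" unfolding assms(3) .
  then show ?thesis using AE_distr_iff[OF assms(1) G] by simp
qed

lemma
  fixes f :: "'s \<Rightarrow> real"
  assumes "X \<in> M \<rightarrow>\<^sub>M S" "Y \<in> M \<rightarrow>\<^sub>M S" "distr M S X = distr M S Y" "f \<in> borel_measurable S"
  shows integrable_identically_distributed:
      "integrable M (\<lambda>\<omega>. f (X \<omega>)) \<longleftrightarrow> integrable M (\<lambda>\<omega>. f (Y \<omega>))"
    and integral_identically_distributed: "(\<integral>\<omega>. f (X \<omega>) \<partial>M) = (\<integral>\<omega>. f (Y \<omega>) \<partial>M)"
  using integrable_distr_eq[OF assms(1,4)] integrable_distr_eq[OF assms(2,4)]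
    integral_distr[OF assms(1,4)] integral_distr[OF assms(2,4)] assms(3) by simp_all

context prob_space
begin

lemma expectation_empirical_mean_centered:
  fixes f :: "'s \<Rightarrow> real"
  assumes "n > 0" and \<xi>: "\<xi> \<in> M \<rightarrow>\<^sub>M S"
    and \<xi>s: "\<And>i. i < n \<Longrightarrow> \<xi>s i \<in> M \<rightarrow>\<^sub>M S" "\<And>i. i < n \<Longrightarrow> distr M S (\<xi>s i) = distr M S \<xi>"
    and f: "f \<in> borel_measurable S" "integrable M (\<lambda>\<omega>. f (\<xi> \<omega>))"
  shows "expectation (\<lambda>\<omega>. (1 / real n) * (\<Sum>i<n. f (\<xi>s i \<omega>)) - expectation (\<lambda>\<omega>. f (\<xi> \<omega>))) = 0"
proof -
  have int: "integrable M (\<lambda>\<omega>. f (\<xi>s i \<omega>))" if "i < n" for i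
    using integrable_identically_distributed[OF \<xi>s(1)[OF that] \<xi> \<xi>s(2)[OF that] f(1)] f(2) by simp
  have E: "expectation (\<lambda>\<omega>. f (\<xi>s i \<omega>)) = expectation (\<lambda>\<omega>. f (\<xi> \<omega>))" if "i < n" for i
    by (rule integral_identically_distributed[OF \<xi>s(1)[OF that] \<xi> \<xi>s(2)[OF that] f(1)])
  have "integrable M (\<lambda>\<omega>. (1 / real n) * (\<Sum>i<n. f (\<xi>s i \<omega>)))"
    by (intro integrable_mult_right Bochner_Integration.integrable_sum int) simp
  then have "expectation (\<lambda>\<omega>. (1 / real n) * (\<Sum>i<n. f (\<xi>s i \<omega>)) - expectation (\<lambda>\<omega>. f (\<xi> \<omega>)))
      = expectation (\<lambda>\<omega>. (1 / real n) * (\<Sum>i<n. f (\<xi>s i \<omega>))) - expectation (\<lambda>\<omega>. f (\<xi> \<omega>))"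
    by (subst Bochner_Integration.integral_diff) (simp_all add: prob_space)
  also have "\<dots> = (1 / real n) * (\<Sum>i<n. expectation (\<lambda>\<omega>. f (\<xi>s i \<omega>))) - expectation (\<lambda>\<omega>. f (\<xi> \<omega>))"
    by (simp add: Bochner_Integration.integral_sum int del: of_nat_Suc)
  also have "\<dots> = 0" using \<open>n > 0\<close> by (simp add: E)
  finally show ?thesis .
qed

text \<open>The summands h (\<xi>s i) / n are independent and confined to an interval of length
  2 c / n, so Hoeffding's lemma applies term by term.\<close>
lemma expectation_exp_empirical_deviation_le:
  fixes h :: "'s \<Rightarrow> real"
  assumes "n > 0" and \<xi>: "\<xi> \<in> M \<rightarrow>\<^sub>M S"
    and \<xi>s: "\<And>i. i < n \<Longrightarrow> \<xi>s i \<in> M \<rightarrow>\<^sub>M S" "\<And>i. i < n \<Longrightarrow> distr M S (\<xi>s i) = distr M S \<xi>"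
    and indep: "indep_vars (\<lambda>_. S) \<xi>s {..<n}"
    and h: "h \<in> borel_measurable S" "integrable M (\<lambda>\<omega>. h (\<xi> \<omega>))"
    and G: "G \<in> sets S" "AE \<omega> in M. \<xi> \<omega> \<in> G" and bound: "\<And>s. s \<in> G \<Longrightarrow> \<bar>h s\<bar> \<le> c"
  shows "expectation (\<lambda>\<omega>. exp (l * ((1 / real n) * (\<Sum>i<n. h (\<xi>s i \<omega>)) - expectation (\<lambda>\<omega>. h (\<xi> \<omega>)))))
         \<le> exp (l\<^sup>2 * c\<^sup>2 / (2 * real n))"
proof -
  define Y where "Y i \<omega> = h (\<xi>s i \<omega>) / real n" for i \<omega>
  note [measurable] = h(1)
  have EY: "expectation (Y i) = expectation (\<lambda>\<omega>. h (\<xi> \<omega>)) / real n" if "i < n" for i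
    unfolding Y_def using integral_identically_distributed[OF \<xi>s(1)[OF that] \<xi> \<xi>s(2)[OF that] h(1)]
    by simp
  interpret Y: indep_interval_bounded_random_variables M "{..<n}" Y "\<lambda>_. - c / real n" "\<lambda>_. c / real n"
  proof
    show "indep_vars (\<lambda>_. borel) Y {..<n}"
      unfolding Y_def by (rule indep_vars_compose2[OF indep]) measurable
    fix i assume "i \<in> {..<n}"
    then have "AE \<omega> in M. \<xi>s i \<omega> \<in> G"
      using AE_identically_distributed[OF \<xi>s(1) \<xi> \<xi>s(2) G] by blast
    then show "AE \<omega> in M. Y i \<omega> \<in> {- c / real n..c / real n}"
    proof eventually_elim
      case (elim \<omega>)
      from bound[OF this] \<open>n > 0\<close> show ?case
        by (auto simp: Y_def divide_le_eq le_divide_eq abs_le_iff)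
    qed
  qed simp
  have "(1 / real n) * (\<Sum>i<n. h (\<xi>s i \<omega>)) - expectation (\<lambda>\<omega>. h (\<xi> \<omega>))
      = (\<Sum>i<n. Y i \<omega> - expectation (Y i))" for \<omega>
  proof -
    have "(\<Sum>i<n. Y i \<omega> - expectation (Y i)) = (\<Sum>i<n. (h (\<xi>s i \<omega>) - expectation (\<lambda>\<omega>. h (\<xi> \<omega>))) / real n)"
      by (intro sum.cong refl) (simp add: EY Y_def diff_divide_distrib)
    then show ?thesis
      using \<open>n > 0\<close> by (simp add: sum_subtractf sum_divide_distrib[symmetric] field_simps)
  qed
  then have "expectation (\<lambda>\<omega>. exp (l * ((1 / real n) * (\<Sum>i<n. h (\<xi>s i \<omega>)) - expectation (\<lambda>\<omega>. h (\<xi> \<omega>)))))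
      \<le> exp (l\<^sup>2 * (\<Sum>i<n. (c / real n - - c / real n)\<^sup>2) / 8)"
    using Y.expectation_exp_sum_centered_le[of l] by simp
  also have "l\<^sup>2 * (\<Sum>i<n. (c / real n - - c / real n)\<^sup>2) / 8 = l\<^sup>2 * c\<^sup>2 / (2 * real n)"
    using \<open>n > 0\<close> by (simp add: power2_eq_square field_simps)
  finally show ?thesis .
qed

lemma expectation_exp_empirical_increment_le:
  fixes f g :: "'s \<Rightarrow> real"
  assumes "n > 0" and \<xi>: "\<xi> \<in> M \<rightarrow>\<^sub>M S"
    and \<xi>s: "\<And>i. i < n \<Longrightarrow> \<xi>s i \<in> M \<rightarrow>\<^sub>M S" "\<And>i. i < n \<Longrightarrow> distr M S (\<xi>s i) = distr M S \<xi>"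
    and indep: "indep_vars (\<lambda>_. S) \<xi>s {..<n}"
    and f: "f \<in> borel_measurable S" "integrable M (\<lambda>\<omega>. f (\<xi> \<omega>))"
    and g: "g \<in> borel_measurable S" "integrable M (\<lambda>\<omega>. g (\<xi> \<omega>))"
    and G: "G \<in> sets S" "AE \<omega> in M. \<xi> \<omega> \<in> G" and fg: "\<And>s. s \<in> G \<Longrightarrow> \<bar>f s - g s\<bar> \<le> c"
  shows "expectation (\<lambda>\<omega>. exp (l * (((1 / real n) * (\<Sum>i<n. f (\<xi>s i \<omega>)) - expectation (\<lambda>\<omega>. f (\<xi> \<omega>)))
            - ((1 / real n) * (\<Sum>i<n. g (\<xi>s i \<omega>)) - expectation (\<lambda>\<omega>. g (\<xi> \<omega>))))))
         \<le> exp (l\<^sup>2 * c\<^sup>2 / (2 * real n))"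
proof -
  have "expectation (\<lambda>\<omega>. f (\<xi> \<omega>) - g (\<xi> \<omega>)) = expectation (\<lambda>\<omega>. f (\<xi> \<omega>)) - expectation (\<lambda>\<omega>. g (\<xi> \<omega>))"
    by (rule Bochner_Integration.integral_diff[OF f(2) g(2)])
  then have eq: "((1 / real n) * (\<Sum>i<n. f (\<xi>s i \<omega>)) - expectation (\<lambda>\<omega>. f (\<xi> \<omega>)))
      - ((1 / real n) * (\<Sum>i<n. g (\<xi>s i \<omega>)) - expectation (\<lambda>\<omega>. g (\<xi> \<omega>)))
      = (1 / real n) * (\<Sum>i<n. f (\<xi>s i \<omega>) - g (\<xi>s i \<omega>)) - expectation (\<lambda>\<omega>. f (\<xi> \<omega>) - g (\<xi> \<omega>))"
    for \<omega> by (simp add: sum_subtractf algebra_simps)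
  show ?thesis
    unfolding eq
    by (rule expectation_exp_empirical_deviation_le[OF \<open>n > 0\<close> \<xi> \<xi>s indep _ _ G])
       (use f g fg in \<open>auto intro: borel_measurable_diff Bochner_Integration.integrable_diff\<close>)
qed

end

section \<open>The logistic loss of a linear predictor\<close>

lemma ln_one_plus_exp_increment:
  fixes a b :: real
  assumes "a \<le> b"
  shows "0 \<le> ln (1 + exp b) - ln (1 + exp a)" "ln (1 + exp b) - ln (1 + exp a) \<le> b - a"
proof -
  show "0 \<le> ln (1 + exp b) - ln (1 + exp a)" using assms by (simp add: add_pos_pos)
  have "1 + exp b \<le> exp (b - a) * (1 + exp a)"
    using assms by (simp add: algebra_simps flip: exp_add)
  moreover have "0 < 1 + exp b" "0 < exp (b - a) * (1 + exp a)"
    by (simp_all add: add_pos_pos)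
  ultimately have "ln (1 + exp b) \<le> ln (exp (b - a) * (1 + exp a))"
    by simp
  also have "\<dots> = (b - a) + ln (1 + exp a)"
    using add_pos_pos[OF zero_less_one exp_gt_zero[of a]] by (simp add: ln_mult)
  finally show "ln (1 + exp b) - ln (1 + exp a) \<le> b - a" by simp
qed

lemma logistic_loss_lipschitz: "\<bar>logistic_loss y a - logistic_loss y b\<bar> \<le> \<bar>a - b\<bar>"
proof -
  have *: "\<bar>logistic_loss y a - logistic_loss y b\<bar> \<le> b - a" if "a \<le> b" for a b
    using ln_one_plus_exp_increment[OF that] that by (cases y) (auto simp: logistic_loss_def)
  show ?thesis
    using *[of a b] *[of b a] by (cases "a \<le> b") (auto simp: abs_minus_commute)
qed

definition obs_pred :: "nat \<Rightarrow> ('m option list \<Rightarrow> real) \<times> (real^'q)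
    \<Rightarrow> ('m option list \<Rightarrow> real) \<times> (real^'q) \<times> bool \<Rightarrow> real" where
  "obs_pred p \<theta> ob = (\<Sum>w\<in>words p. fst ob w * fst \<theta> w) + fst (snd ob) \<bullet> snd \<theta>"

definition obs_loss :: "nat \<Rightarrow> ('m option list \<Rightarrow> real) \<times> (real^'q)
    \<Rightarrow> ('m option list \<Rightarrow> real) \<times> (real^'q) \<times> bool \<Rightarrow> real" where
  "obs_loss p \<theta> ob = logistic_loss (snd (snd ob)) (obs_pred p \<theta> ob)"

definition bounded_obs :: "nat \<Rightarrow> real \<Rightarrow> real \<Rightarrow> (('m option list \<Rightarrow> real) \<times> (real^'q) \<times> bool) set" where
  "bounded_obs p E C =
     {ob \<in> space obs_space. L2_set (fst ob) (words p) \<le> E \<and> norm (fst (snd ob)) \<le> C}"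

lemma logistic_loss_lin_pred: "logistic_loss y (lin_pred p T x z \<theta>) = obs_loss p \<theta> (obs T x z y)"
  by (simp add: obs_def obs_loss_def obs_pred_def lin_pred_def mult.commute)

lemma obs_loss_measurable [measurable]: "obs_loss p \<theta> \<in> borel_measurable obs_space"
  unfolding obs_loss_def logistic_loss_def obs_space_def obs_pred_def by measurable

lemma bounded_obs_sets: "bounded_obs p E C \<in> sets obs_space"
  unfolding bounded_obs_def L2_set_def obs_space_def by measurable

lemma obs_pred_lipschitz:
  assumes "ob \<in> bounded_obs p E C"
  shows "\<bar>obs_pred p \<theta> ob - obs_pred p \<eta> ob\<bar> \<le> (E + C) * eucl_norm_par p (fst \<theta> - fst \<eta>, snd \<theta> - snd \<eta>)"
proof -
  define d where "d = fst \<theta> - fst \<eta>"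
  define e where "e = eucl_norm_par p (d, snd \<theta> - snd \<eta>)"
  have E: "L2_set (fst ob) (words p) \<le> E" and C: "norm (fst (snd ob)) \<le> C"
    using assms unfolding bounded_obs_def by auto
  then have "0 \<le> E" "0 \<le> C" by (meson L2_set_nonneg norm_ge_zero order_trans)+
  have e: "e = sqrt ((L2_set d (words p))\<^sup>2 + (norm (snd \<theta> - snd \<eta>))\<^sup>2)"
    unfolding e_def eucl_norm_par_def L2_set_def by (simp add: sum_nonneg)
  have "obs_pred p \<theta> ob - obs_pred p \<eta> ob = (\<Sum>w\<in>words p. fst ob w * d w) + fst (snd ob) \<bullet> (snd \<theta> - snd \<eta>)"
    unfolding obs_pred_def d_def by (simp add: sum_subtractf algebra_simps inner_diff_right)
  also have "\<bar>\<dots>\<bar> \<le> L2_set (fst ob) (words p) * L2_set d (words p)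
      + norm (fst (snd ob)) * norm (snd \<theta> - snd \<eta>)"
  proof (rule order_trans[OF abs_triangle_ineq add_mono])
    have "\<bar>\<Sum>w\<in>words p. fst ob w * d w\<bar> \<le> (\<Sum>w\<in>words p. \<bar>fst ob w\<bar> * \<bar>d w\<bar>)"
      by (rule order_trans[OF sum_abs]) (simp add: abs_mult)
    also have "\<dots> \<le> L2_set (fst ob) (words p) * L2_set d (words p)" by (rule L2_set_mult_ineq)
    finally show "\<bar>\<Sum>w\<in>words p. fst ob w * d w\<bar> \<le> L2_set (fst ob) (words p) * L2_set d (words p)" .
  qed (rule Cauchy_Schwarz_ineq2)
  also have "\<dots> \<le> E * e + C * e"
    using E C e \<open>0 \<le> E\<close> \<open>0 \<le> C\<close> by (intro add_mono mult_mono real_le_rsqrt) auto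
  finally show ?thesis by (simp add: e_def d_def algebra_simps)
qed

lemma obs_loss_lipschitz:
  assumes "ob \<in> bounded_obs p E C"
  shows "\<bar>obs_loss p \<theta> ob - obs_loss p \<eta> ob\<bar> \<le> (E + C) * eucl_norm_par p (fst \<theta> - fst \<eta>, snd \<theta> - snd \<eta>)"
  unfolding obs_loss_def
  using logistic_loss_lipschitz order_trans obs_pred_lipschitz[OF assms] by blast

lemma (in finite_measure) integrable_obs_loss:
  fixes \<theta> :: "('m option list \<Rightarrow> real) \<times> (real^'q)"
  assumes "\<xi> \<in> M \<rightarrow>\<^sub>M obs_space" "AE \<omega> in M. \<xi> \<omega> \<in> bounded_obs p E C"
  shows "integrable M (\<lambda>\<omega>. obs_loss p \<theta> (\<xi> \<omega>))"
proof (rule integrable_const_bound)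
  define \<theta>0 :: "('m option list \<Rightarrow> real) \<times> (real^'q)" where "\<theta>0 = ((\<lambda>_. 0), 0)"
  define B where "B = (E + C) * eucl_norm_par p (fst \<theta> - fst \<theta>0, snd \<theta> - snd \<theta>0) + ln 2"
  have \<theta>0_loss: "obs_loss p \<theta>0 ob = ln 2" for ob
    by (simp add: obs_loss_def obs_pred_def logistic_loss_def \<theta>0_def)
  have "0 \<le> ln (2::real)" by simp
  then have bound: "\<bar>obs_loss p \<theta> ob\<bar> \<le> B" if "ob \<in> bounded_obs p E C" for ob
    using obs_loss_lipschitz[OF that, of \<theta> \<theta>0] by (simp only: B_def \<theta>0_loss abs_le_iff) linarith
  from assms(2) show "AE \<omega> in M. norm (obs_loss p \<theta> (\<xi> \<omega>)) \<le> B"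
    by eventually_elim (simp add: bound)
qed (use assms(1) in measurable)

lemma AE_obs_bounded:
  fixes X :: "'w \<Rightarrow> real \<Rightarrow> real^'m"
  assumes "0 \<le> T"
    and paths: "\<forall>\<omega>\<in>space M. continuous_on {0..T} (X \<omega>) \<and> bounded_variation (X \<omega>) 0 T"
    and meas: "(\<lambda>\<omega>. obs T (X \<omega>) (z \<omega>) (y \<omega>)) \<in> M \<rightarrow>\<^sub>M obs_space"
    and bX: "AE \<omega> in M. total_variation (X \<omega>) 0 T < CX" and bz: "AE \<omega> in M. norm (z \<omega>) < Cz"
  shows "AE \<omega> in M. obs T (X \<omega>) (z \<omega>) (y \<omega>) \<in> bounded_obs p (exp (CX + T)) Cz"
  using AE_space bX bz
proof eventually_elim
  case (elim \<omega>)
  have "L2_set (signature T (X \<omega>)) (words p) \<le> exp (total_variation (X \<omega>) 0 T + T)"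
    using paths elim(1) \<open>0 \<le> T\<close> by (intro L2_signature_le_exp) auto
  also have "\<dots> \<le> exp (CX + T)" using elim(2) by simp
  finally show ?case
    using measurable_space[OF meas elim(1)] elim(3) by (simp add: bounded_obs_def obs_def)
qed

theorem lemma1:
  fixes M :: "'w measure"
    and T CX Cz r :: real and p n :: nat
    and x0 :: "real^'m"
    and X :: "'w \<Rightarrow> real \<Rightarrow> real^'m" and z :: "'w \<Rightarrow> real^'q" and y :: "'w \<Rightarrow> bool"
    and Xs :: "nat \<Rightarrow> 'w \<Rightarrow> real \<Rightarrow> real^'m" and zs :: "nat \<Rightarrow> 'w \<Rightarrow> real^'q"
    and ys :: "nat \<Rightarrow> 'w \<Rightarrow> bool"
  assumes "prob_space M"
    and "T > 0" and "r > 0" and "n > 0"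
    and paths: "\<forall>\<omega>\<in>space M. continuous_on {0..T} (X \<omega>) \<and> bounded_variation (X \<omega>) 0 T \<and> X \<omega> 0 = x0"
    and paths_i: "\<forall>i<n. \<forall>\<omega>\<in>space M. continuous_on {0..T} (Xs i \<omega>) \<and> bounded_variation (Xs i \<omega>) 0 T
                              \<and> Xs i \<omega> 0 = x0"
    and meas: "(\<lambda>\<omega>. obs T (X \<omega>) (z \<omega>) (y \<omega>)) \<in> measurable M obs_space"
    and meas_i: "\<forall>i<n. (\<lambda>\<omega>. obs T (Xs i \<omega>) (zs i \<omega>) (ys i \<omega>)) \<in> measurable M obs_space"
    and indep: "prob_space.indep_vars M (\<lambda>_. obs_space)
                  (\<lambda>i \<omega>. obs T (Xs i \<omega>) (zs i \<omega>) (ys i \<omega>)) {..<n}"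
    and ident: "\<forall>i<n. distr M obs_space (\<lambda>\<omega>. obs T (Xs i \<omega>) (zs i \<omega>) (ys i \<omega>))
                      = distr M obs_space (\<lambda>\<omega>. obs T (X \<omega>) (z \<omega>) (y \<omega>))"
    and bX: "AE \<omega> in M. total_variation (X \<omega>) 0 T < CX"
    and bz: "AE \<omega> in M. norm (z \<omega>) < Cz"
  defines "Z \<equiv> \<lambda>\<theta> \<omega>.
              (1 / real n) * (\<Sum>i<n. logistic_loss (ys i \<omega>) (lin_pred p T (Xs i \<omega>) (zs i \<omega>) \<theta>))
              - prob_space.expectation M
                  (\<lambda>\<omega>'. logistic_loss (y \<omega>') (lin_pred p T (X \<omega>') (z \<omega>') \<theta>))"
    and "D \<equiv> \<lambda>\<theta> \<eta>. 2 * (Cz + exp (CX + T)) / sqrt (real n)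
                      * eucl_norm_par p (fst \<theta> - fst \<eta>, snd \<theta> - snd \<eta>)"
  shows "(\<forall>\<theta>\<in>ball_par p r. prob_space.expectation M (Z \<theta>) = 0) \<and>
         (\<forall>\<theta>\<in>ball_par p r. \<forall>\<eta>\<in>ball_par p r. \<forall>lam::real.
            prob_space.expectation M (\<lambda>\<omega>. exp (lam * (Z \<theta> \<omega> - Z \<eta> \<omega>)))
              \<le> exp (lam\<^sup>2 * (D \<theta> \<eta>)\<^sup>2 / 2))"
proof -
  interpret prob_space M by fact
  let ?\<xi> = "\<lambda>\<omega>. obs T (X \<omega>) (z \<omega>) (y \<omega>)" and ?\<xi>s = "\<lambda>i \<omega>. obs T (Xs i \<omega>) (zs i \<omega>) (ys i \<omega>)"
  let ?G = "bounded_obs p (exp (CX + T)) Cz :: (('m option list \<Rightarrow> real) \<times> (real^'q) \<times> bool) set"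
  have G: "AE \<omega> in M. ?\<xi> \<omega> \<in> ?G"
    using \<open>T > 0\<close> paths by (intro AE_obs_bounded[OF _ _ meas bX bz]) auto
  have int: "integrable M (\<lambda>\<omega>. obs_loss p \<theta> (?\<xi> \<omega>))" for \<theta>
    by (rule integrable_obs_loss[OF meas G])
  have Z: "Z \<theta> = (\<lambda>\<omega>. (1 / real n) * (\<Sum>i<n. obs_loss p \<theta> (?\<xi>s i \<omega>))
      - expectation (\<lambda>\<omega>. obs_loss p \<theta> (?\<xi> \<omega>)))" for \<theta>
    by (simp add: Z_def logistic_loss_lin_pred)
  have "expectation (Z \<theta>) = 0" for \<theta>
    unfolding Z using \<open>n > 0\<close> meas meas_i ident int
    by (intro expectation_empirical_mean_centered[where \<xi> = ?\<xi> and \<xi>s = ?\<xi>s]) auto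
  moreover have "expectation (\<lambda>\<omega>. exp (lam * (Z \<theta> \<omega> - Z \<eta> \<omega>))) \<le> exp (lam\<^sup>2 * (D \<theta> \<eta>)\<^sup>2 / 2)"
    for \<theta> \<eta> lam
  proof -
    define c where "c = (exp (CX + T) + Cz) * eucl_norm_par p (fst \<theta> - fst \<eta>, snd \<theta> - snd \<eta>)"
    have "\<bar>obs_loss p \<theta> s - obs_loss p \<eta> s\<bar> \<le> c" if "s \<in> ?G" for s
      using obs_loss_lipschitz[OF that] by (simp add: c_def)
    then have incr: "expectation (\<lambda>\<omega>. exp (lam * (Z \<theta> \<omega> - Z \<eta> \<omega>))) \<le> exp (lam\<^sup>2 * c\<^sup>2 / (2 * real n))"
      unfolding Z using \<open>n > 0\<close> meas meas_i ident indep int G bounded_obs_sets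
      by (intro expectation_exp_empirical_increment_le[where \<xi> = ?\<xi> and \<xi>s = ?\<xi>s]) auto
    have "D \<theta> \<eta> = 2 * c / sqrt (real n)" by (simp add: D_def c_def add.commute)
    then have "lam\<^sup>2 * (D \<theta> \<eta>)\<^sup>2 / 2 = 4 * (lam\<^sup>2 * c\<^sup>2 / (2 * real n))"
      by (simp add: power_divide power_mult_distrib)
    moreover have "0 \<le> lam\<^sup>2 * c\<^sup>2 / (2 * real n)" by simp
    ultimately have "lam\<^sup>2 * c\<^sup>2 / (2 * real n) \<le> lam\<^sup>2 * (D \<theta> \<eta>)\<^sup>2 / 2" by linarith
    then have "exp (lam\<^sup>2 * c\<^sup>2 / (2 * real n)) \<le> exp (lam\<^sup>2 * (D \<theta> \<eta>)\<^sup>2 / 2)" by simp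
    with incr show ?thesis by (rule order_trans)
  qed
  ultimately show ?thesis by blast
qed

end
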